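(* For $r>1$ and integer $N\ge1$, $$\eta(r,2,N)=\frac{1}{\sum_{i=0}^N\left(\frac{r}{r-1}\right)^i}<\frac{1}{N+1},$$ and $\lim_{r\to\infty}\eta(r,2,N)=\frac{1}{N+1}$.
   Context: Single item auction with $N$ buyers whose values are i.i.d., each taking values $0<x^1<\dots<x^K$ with probabilities $p^i>0$, $\sum_ip^i=1$. Let $z^i=(\sum_{j=1}^ip^j)^N-(\sum_{j=1}^{i-1}p^j)^N$ and reserve index $t(x,p)=\max\{i: i\in\arg\max_{1\le k\le K}x^k\sum_{j=k}^Kp^j\}$. The efficiency loss ratio of the welfare-maximizing revenue-optimal auction is $\mathrm{ELR}_N(x,p)=\sum_{i=1}^{t(x,p)-1}z^ix^i/\sum_{i=1}^Kz^ix^i$. $\eta(r,K,N)$ is the supremum of $\mathrm{ELR}_N(x,p)$ over all such $p$ and all $x$ with $0<x^1<\dots<x^K\le rx^1$. *)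

theory Defs
  imports Complex_Main
begin

text \<open>Values are indexed x 1, ..., x K and probabilities p 1, ..., p K
  (functions nat => real, only indices 1..K matter).\<close>

definition zprob :: "nat \<Rightarrow> (nat \<Rightarrow> real) \<Rightarrow> nat \<Rightarrow> real" where
  "zprob N p i = (\<Sum>j=1..i. p j) ^ N - (\<Sum>j=1..i-1. p j) ^ N"

definition reserve_index :: "nat \<Rightarrow> (nat \<Rightarrow> real) \<Rightarrow> (nat \<Rightarrow> real) \<Rightarrow> nat" where
  "reserve_index K x p =
     Max {i \<in> {1..K}. \<forall>k\<in>{1..K}. x k * (\<Sum>j=k..K. p j) \<le> x i * (\<Sum>j=i..K. p j)}"

definition ELR :: "nat \<Rightarrow> nat \<Rightarrow> (nat \<Rightarrow> real) \<Rightarrow> (nat \<Rightarrow> real) \<Rightarrow> real" where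
  "ELR N K x p =
     (\<Sum>i=1..reserve_index K x p - 1. zprob N p i * x i) / (\<Sum>i=1..K. zprob N p i * x i)"

definition admissible :: "real \<Rightarrow> nat \<Rightarrow> (nat \<Rightarrow> real) \<Rightarrow> (nat \<Rightarrow> real) \<Rightarrow> bool" where
  "admissible r K x p \<longleftrightarrow>
     (\<forall>i\<in>{1..K}. p i > 0) \<and> (\<Sum>i=1..K. p i) = 1 \<and>
     0 < x 1 \<and> (\<forall>i\<in>{1..K}. \<forall>j\<in>{1..K}. i < j \<longrightarrow> x i < x j) \<and> x K \<le> r * x 1"

definition eta :: "real \<Rightarrow> nat \<Rightarrow> nat \<Rightarrow> real" where
  "eta r K N = Sup {ELR N K x p | x p. admissible r K x p}"

end

theory Submission
  imports Defs "HOL-Real_Asymp.Real_Asymp"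
begin

text \<open>With two values the reserve sits at \<open>x 2\<close> exactly when \<open>x 1 \<le> x 2 * p 2\<close>; only then
  is there a loss, namely \<open>u\<^sup>N x\<^sub>1 / (u\<^sup>N x\<^sub>1 + (1 - u\<^sup>N) x\<^sub>2)\<close> with \<open>u = p 1\<close>.
  Together with \<open>x 2 \<le> r * x 1\<close> that condition forces \<open>u a \<le> 1\<close> for \<open>a = r / (r - 1)\<close>,
  so \<open>u\<^sup>N (a + \<dots> + a\<^sup>N) \<le> 1 + u + \<dots> + u\<^sup>N\<^sup>-\<^sup>1 = (1 - u\<^sup>N) / (1 - u) \<le> (1 - u\<^sup>N) x\<^sub>2 / x\<^sub>1\<close>,
  which is the bound.  Equality holds for \<open>x\<^sub>2 = r x\<^sub>1\<close> and \<open>u = 1 - 1/r\<close>.\<close>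

lemma power_mult_sum_power_eq:
  fixes u a :: "'a :: comm_semiring_1"
  shows "u ^ N * (\<Sum>i=1..N. a ^ i) = (\<Sum>i<N. u ^ i * (u * a) ^ (N - i))"
proof (induction N)
  case 0
  then show ?case by simp
next
  case (Suc N)
  have "u ^ Suc N * (\<Sum>i=1..Suc N. a ^ i) = u * (u ^ N * (\<Sum>i=1..N. a ^ i)) + (u * a) ^ Suc N"
    by (simp add: sum_distrib_left distrib_left power_mult_distrib mult_ac)
  also have "\<dots> = (\<Sum>i<N. u ^ Suc i * (u * a) ^ (N - i)) + (u * a) ^ Suc N"
    by (simp only: Suc.IH) (simp add: sum_distrib_left mult_ac)
  also have "\<dots> = (\<Sum>i<Suc N. u ^ i * (u * a) ^ (Suc N - i))"
    by (subst sum.lessThan_Suc_shift) (simp add: ac_simps)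
  finally show ?case .
qed

lemma power_mult_sum_power_le:
  fixes u a :: real
  assumes "0 \<le> u" "0 \<le> u * a" "u * a \<le> 1"
  shows "u ^ N * (\<Sum>i=1..N. a ^ i) \<le> (\<Sum>i<N. u ^ i)"
  unfolding power_mult_sum_power_eq
  using assms by (intro sum_mono mult_left_le power_le_one) auto

lemma sum_atLeastAtMost_one_two:
  "sum f {1..2::nat} = f 1 + f 2" "sum f {Suc 0..2} = f 1 + f 2"
  by (simp_all add: numeral_2_eq_2)

lemma atLeastAtMost_two: "{1..2::nat} = {1, 2}"
  by auto

lemma reserve_index_two:
  assumes "p 1 + p 2 = 1"
  shows "reserve_index 2 x p = (if x 1 \<le> x 2 * p 2 then 2 else 1)"
proof -
  have "{i \<in> {1..2}. \<forall>k\<in>{1..2}. x k * (\<Sum>j=k..2. p j) \<le> x i * (\<Sum>j=i..2. p j)}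
        = (if x 1 \<le> x 2 * p 2 then (if x 2 * p 2 \<le> x 1 then {1, 2} else {2}) else {1})"
    unfolding atLeastAtMost_two using assms by (auto simp: sum_atLeastAtMost_one_two)
  then show ?thesis
    unfolding reserve_index_def by auto
qed

lemma ELR_two:
  assumes "N \<ge> 1" "p 1 + p 2 = 1"
  shows "ELR N 2 x p =
    (if x 1 \<le> x 2 * p 2 then p 1 ^ N * x 1 / (p 1 ^ N * x 1 + (1 - p 1 ^ N) * x 2) else 0)"
proof -
  have "zprob N p 1 = p 1 ^ N" "zprob N p 2 = 1 - p 1 ^ N"
    using assms by (simp_all add: zprob_def sum_atLeastAtMost_one_two)
  then show ?thesis
    unfolding ELR_def reserve_index_two[OF assms(2)]
    by (simp add: sum_atLeastAtMost_one_two)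
qed

lemma admissible_two_iff:
  "admissible r 2 x p \<longleftrightarrow>
     p 1 > 0 \<and> p 2 > 0 \<and> p 1 + p 2 = 1 \<and> 0 < x 1 \<and> x 1 < x 2 \<and> x 2 \<le> r * x 1"
  unfolding admissible_def sum_atLeastAtMost_one_two
  by (auto simp: numeral_2_eq_2 le_Suc_eq)

lemma ELR_two_le:
  fixes r :: real
  assumes "N \<ge> 1" "r > 1" "admissible r 2 x p"
  shows "ELR N 2 x p \<le> 1 / (\<Sum>i=0..N. (r / (r - 1)) ^ i)"
proof -
  define a where "a = r / (r - 1)"
  define u where "u = p 1"
  have u: "0 < u" "u < 1" and p2: "p 2 = 1 - u" and x: "0 < x 1" "x 1 < x 2" "x 2 \<le> r * x 1"
    using assms(3) by (auto simp: admissible_two_iff u_def)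
  have S_pos: "(\<Sum>i=0..N. a ^ i) > 0"
    using assms(2) by (intro sum_pos) (auto simp: a_def)
  show ?thesis
  proof (cases "x 1 \<le> x 2 * (1 - u)")
    case False
    then show ?thesis
      using ELR_two[OF assms(1)] p2 S_pos by (simp add: a_def u_def)
  next
    case reserve: True
    have "x 1 \<le> x 2 * (1 - u)"
      using reserve .
    also have "\<dots> \<le> r * x 1 * (1 - u)"
      using x(3) u by (intro mult_right_mono) auto
    finally have "1 \<le> r * (1 - u)"
      using x(1) by (simp add: mult_ac)
    then have ua: "u * a \<le> 1"
      using x(1) assms(2) by (simp add: a_def field_simps)
    define G where "G = (\<Sum>i<N. u ^ i)"
    have "x 1 * (u ^ N * (\<Sum>i=1..N. a ^ i)) \<le> x 1 * G"
      using power_mult_sum_power_le[OF _ _ ua, of N] u x(1) assms(2)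
      by (simp add: G_def a_def)
    also have "\<dots> \<le> x 2 * (1 - u) * G"
      unfolding G_def using reserve u by (intro mult_right_mono sum_nonneg) auto
    also have "\<dots> = (1 - u ^ N) * x 2"
      by (simp add: G_def one_diff_power_eq)
    finally have key: "u ^ N * x 1 * (\<Sum>i=0..N. a ^ i) \<le> u ^ N * x 1 + (1 - u ^ N) * x 2"
      by (simp add: sum.atLeast_Suc_atMost algebra_simps)
    have "u ^ N * x 1 + (1 - u ^ N) * x 1 \<le> u ^ N * x 1 + (1 - u ^ N) * x 2"
      using u x(2) by (intro add_left_mono mult_left_mono) (auto simp: power_le_one)
    then have "u ^ N * x 1 + (1 - u ^ N) * x 2 > 0"
      using x(1) by (simp add: algebra_simps)
    then have "u ^ N * x 1 / (u ^ N * x 1 + (1 - u ^ N) * x 2) \<le> 1 / (\<Sum>i=0..N. a ^ i)"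
      using key S_pos by (simp add: field_simps)
    then show ?thesis
      using ELR_two[OF assms(1)] p2 reserve by (simp add: a_def u_def)
  qed
qed

lemma ELR_two_attains:
  fixes r :: real
  assumes "N \<ge> 1" "r > 1"
  defines "x \<equiv> \<lambda>i. if i = 1 then 1 else r"
    and "p \<equiv> \<lambda>i. if i = 1 then 1 - 1 / r else 1 / r"
  shows "admissible r 2 x p" "ELR N 2 x p = 1 / (\<Sum>i=0..N. (r / (r - 1)) ^ i)"
proof -
  show "admissible r 2 x p"
    using assms(2) by (simp add: admissible_two_iff x_def p_def)
  define a where "a = r / (r - 1)"
  define u where "u = 1 - 1 / r"
  have ua: "u * a = 1" and u: "0 < u"
    using assms(2) by (simp_all add: u_def a_def field_simps)
  have "u ^ N * (\<Sum>i=1..N. a ^ i) = (\<Sum>i<N. u ^ i)"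
    unfolding power_mult_sum_power_eq ua by simp
  also have "\<dots> = (1 - u ^ N) * r"
    using assms(2) one_diff_power_eq[of u N] by (simp add: u_def field_simps)
  finally have "u ^ N + (1 - u ^ N) * r = u ^ N * (\<Sum>i=0..N. a ^ i)"
    by (simp add: sum.atLeast_Suc_atMost algebra_simps)
  moreover have "ELR N 2 x p = u ^ N / (u ^ N + (1 - u ^ N) * r)"
    using ELR_two[OF assms(1)] assms(2) by (simp add: x_def p_def u_def)
  ultimately show "ELR N 2 x p = 1 / (\<Sum>i=0..N. (r / (r - 1)) ^ i)"
    using u by (simp add: a_def)
qed

lemma eta_two:
  fixes r :: real
  assumes "N \<ge> 1" "r > 1"
  shows "eta r 2 N = 1 / (\<Sum>i=0..N. (r / (r - 1)) ^ i)"
  unfolding eta_def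
proof (rule cSup_eq_maximum)
  show "1 / (\<Sum>i=0..N. (r / (r - 1)) ^ i) \<in> {ELR N 2 x p |x p. admissible r 2 x p}"
    using ELR_two_attains[OF assms] by (intro CollectI exI conjI[OF sym])
qed (use ELR_two_le[OF assms] in blast)

lemma sum_power_atLeast0_gt:
  fixes a :: real
  assumes "a > 1" "N \<ge> 1"
  shows "(\<Sum>i=0..N. a ^ i) > real N + 1"
proof -
  have "(\<Sum>i=0..N. (1::real)) < (\<Sum>i=0..N. a ^ i)"
    using assms by (intro sum_strict_mono_ex1) (auto intro!: bexI[of _ N] one_le_power)
  then show ?thesis
    by simp
qed

theorem corollary1:
  fixes N :: nat
  assumes "N \<ge> 1"
  shows "(\<forall>r::real. r > 1 \<longrightarrow>
            eta r 2 N = 1 / (\<Sum>i=0..N. (r / (r - 1)) ^ i) \<and>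
            1 / (\<Sum>i=0..N. (r / (r - 1)) ^ i) < 1 / (real N + 1)) \<and>
         ((\<lambda>r. eta r 2 N) \<longlongrightarrow> 1 / (real N + 1)) at_top"
proof (intro conjI allI impI)
  fix r :: real
  assume r: "r > 1"
  show "eta r 2 N = 1 / (\<Sum>i=0..N. (r / (r - 1)) ^ i)"
    using eta_two[OF assms r] .
  have "r / (r - 1) > 1"
    using r by (simp add: field_simps)
  from sum_power_atLeast0_gt[OF this assms]
  show "1 / (\<Sum>i=0..N. (r / (r - 1)) ^ i) < 1 / (real N + 1)"
    by (intro divide_strict_left_mono) auto
next
  have "((\<lambda>r::real. r / (r - 1)) \<longlongrightarrow> 1) at_top"
    by real_asymp
  then have "((\<lambda>r::real. 1 / (\<Sum>i=0..N. (r / (r - 1)) ^ i)) \<longlongrightarrow> 1 / (\<Sum>i=0..N. 1 ^ i)) at_top"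
    by (intro tendsto_intros) simp_all
  then have "((\<lambda>r::real. 1 / (\<Sum>i=0..N. (r / (r - 1)) ^ i)) \<longlongrightarrow> 1 / (real N + 1)) at_top"
    by (simp add: add.commute)
  then show "((\<lambda>r. eta r 2 N) \<longlongrightarrow> 1 / (real N + 1)) at_top"
    by (rule Lim_transform_eventually)
       (auto intro: eventually_mono[OF eventually_gt_at_top[of 1]] simp: eta_two[OF assms] add.commute)
qed

end
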